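(* Let $A = \begin{pmatrix} 1 & 2 \\ 0 & 1 \end{pmatrix}$, $B = \begin{pmatrix} 1 & 0 \\ 2 & 1 \end{pmatrix}$ and $C = \begin{pmatrix} 2 & 1 \\ 1 & 1 \end{pmatrix}$, viewed as matrices over $\mathbb{Z}$. Then the semigroup generated by $A$, $B$, $C$ under matrix multiplication is free on $\{A, B, C\}$. That is, if $w_1 \cdots w_m$ and $v_1 \cdots v_k$ are products with each $w_i, v_j \in \{A,B,C\}$ and $w_1\cdots w_m = v_1 \cdots v_k$ as matrices, then $m = k$ and $w_i = v_i$ for all $i$. *)

theory Defs
  imports "HOL-Analysis.Analysis"
begin

definition matA :: "int^2^2" where
  "matA = vector [vector [1, 2], vector [0, 1]]"

definition matB :: "int^2^2" where
  "matB = vector [vector [1, 0], vector [2, 1]]"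

definition matC :: "int^2^2" where
  "matC = vector [vector [2, 1], vector [1, 1]]"

definition word_prod :: "(int^2^2) list \<Rightarrow> int^2^2" where
  "word_prod ws = foldr (\<lambda>M P. M ** P) ws (mat 1)"

end

theory Submission
  imports Defs
begin

text \<open>
  All products of \<open>A\<close>, \<open>B\<close>, \<open>C\<close> lie in the monoid of nonnegative integer matrices
  of determinant 1, and no row of such a matrix \<open>Q\<close> vanishes. Writing \<open>r\<^sub>1, r\<^sub>2\<close> for the
  rows of \<open>M Q\<close>, the vectors \<open>r\<^sub>1 - 2r\<^sub>2\<close> (for \<open>M = A\<close>), \<open>r\<^sub>2 - 2r\<^sub>1\<close> (for \<open>M = B\<close>), resp.
  \<open>r\<^sub>1 - r\<^sub>2\<close> and \<open>2r\<^sub>2 - r\<^sub>1\<close> (for \<open>M = C\<close>) are rows of \<open>Q\<close>, hence nonnegative and nonzero.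
  These three cones are pairwise disjoint and do not contain the identity, so the
  product of a nonempty word determines its first letter; as the generators are
  invertible, that letter can be cancelled and induction on the length finishes the proof.
\<close>

lemma nonneg_matrix_mult:
  fixes A :: "'a::linordered_semiring_1 ^'n^'m" and B :: "'a^'p^'n"
  assumes "0 \<le> A" and "0 \<le> B"
  shows "0 \<le> A ** B"
  using assms by (simp add: less_eq_vec_def matrix_matrix_mult_def sum_nonneg)

lemma matrix_mult_2_entry:
  fixes A :: "'a::semiring_1^2^'m" and B :: "'a^'n^2"
  shows "(A ** B)$i$j = A$i$1 * B$1$j + A$i$2 * B$2$j"
  by (simp add: matrix_matrix_mult_def sum_2)

lemma det_1_2x2_mult_left_cancel:
  fixes M Q R :: "'a::comm_ring_1^2^2"
  assumes "det M = 1" and "M ** Q = M ** R"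
  shows "Q = R"
proof -
  define adj :: "'a^2^2" where "adj = vector [vector [M$2$2, - M$1$2], vector [- M$2$1, M$1$1]]"
  have "adj ** M = mat 1"
    using assms(1) by (simp add: adj_def vec_eq_iff forall_2 matrix_mult_2_entry det_2 mat_def algebra_simps)
  then show ?thesis
    by (metis assms(2) matrix_mul_assoc matrix_mul_lid)
qed

definition positive_unimodular :: "'a::linordered_idom^'n^'n \<Rightarrow> bool" where
  "positive_unimodular Q \<longleftrightarrow> 0 \<le> Q \<and> det Q = 1"

lemma positive_unimodular_mat_1: "positive_unimodular (mat 1)"
proof -
  have "0 \<le> (mat 1 :: 'a::linordered_idom^'n^'n)"
    by (simp add: less_eq_vec_def mat_def)
  then show ?thesis
    by (simp add: positive_unimodular_def)
qed

lemma positive_unimodular_mult: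
  "positive_unimodular A \<Longrightarrow> positive_unimodular B \<Longrightarrow> positive_unimodular (A ** B)"
  by (simp add: positive_unimodular_def nonneg_matrix_mult det_mul)

lemma positive_unimodular_row_sum_pos:
  fixes Q :: "'a::linordered_idom^2^2"
  assumes "positive_unimodular Q"
  shows "0 < Q$i$1 + Q$i$2"
proof -
  have nonneg: "0 \<le> Q$i$j" for i j
    using assms by (simp add: positive_unimodular_def less_eq_vec_def)
  have "Q$i \<noteq> 0"
    using assms exhaust_2[of i] by (auto simp: positive_unimodular_def det_2)
  then have "Q$i$1 \<noteq> 0 \<or> Q$i$2 \<noteq> 0"
    by (auto simp: vec_eq_iff forall_2)
  then show ?thesis
    using nonneg[of i 1] nonneg[of i 2] by (auto simp: add_pos_nonneg add_nonneg_pos order_le_neq_trans)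
qed

lemma positive_unimodular_generators:
  "M \<in> {matA, matB, matC} \<Longrightarrow> positive_unimodular M"
  by (auto simp: positive_unimodular_def less_eq_vec_def forall_2 det_2 matA_def matB_def matC_def)

lemma word_prod_Nil [simp]: "word_prod [] = mat 1"
  and word_prod_Cons [simp]: "word_prod (M # ws) = M ** word_prod ws"
  by (simp_all add: word_prod_def)

lemma positive_unimodular_word_prod:
  "\<forall>M \<in> set ws. positive_unimodular M \<Longrightarrow> positive_unimodular (word_prod ws)"
  by (induction ws) (simp_all add: positive_unimodular_mat_1 positive_unimodular_mult)

lemma generator_mult_neq_mat_1:
  assumes "M \<in> {matA, matB, matC}" and "positive_unimodular Q"
  shows "M ** Q \<noteq> mat 1"
proof
  assume "M ** Q = mat 1"
  then have "\<forall>i j. (M ** Q)$i$j = mat 1$i$j"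
    by simp
  moreover have "\<forall>i j. 0 \<le> Q$i$j"
    using assms(2) by (simp add: positive_unimodular_def less_eq_vec_def)
  ultimately show False
    using assms(1)
    by (auto simp: matrix_mult_2_entry mat_def matA_def matB_def matC_def forall_2)
qed

lemma generator_mult_eq_imp_eq:
  assumes "M \<in> {matA, matB, matC}" and "N \<in> {matA, matB, matC}"
    and "positive_unimodular Q" and "positive_unimodular R"
    and "M ** Q = N ** R"
  shows "M = N"
proof -
  have "\<forall>i j. (M ** Q)$i$j = (N ** R)$i$j"
    using assms(5) by simp
  moreover have "\<forall>i j. 0 \<le> Q$i$j \<and> 0 \<le> R$i$j"
    using assms(3,4) by (simp add: positive_unimodular_def less_eq_vec_def)
  moreover have "\<forall>i. 0 < Q$i$1 + Q$i$2 \<and> 0 < R$i$1 + R$i$2"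
    using assms(3,4) positive_unimodular_row_sum_pos by blast
  ultimately show ?thesis
    using assms(1,2)
    by (auto simp: matrix_mult_2_entry matA_def matB_def matC_def forall_2)
qed

lemma positive_unimodular_generator_word:
  "set ws \<subseteq> {matA, matB, matC} \<Longrightarrow> positive_unimodular (word_prod ws)"
  using positive_unimodular_generators positive_unimodular_word_prod by blast

lemma generator_word_prod_eq_mat_1_iff:
  assumes "set ws \<subseteq> {matA, matB, matC}"
  shows "word_prod ws = mat 1 \<longleftrightarrow> ws = []"
proof (cases ws)
  case (Cons w ws')
  then show ?thesis
    using assms generator_mult_neq_mat_1[of w "word_prod ws'"] positive_unimodular_generator_word[of ws']
    by simp
qed simp

lemma word_prod_eq_imp_eq:
  assumes "set ws \<subseteq> {matA, matB, matC}" and "set vs \<subseteq> {matA, matB, matC}"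
    and "word_prod ws = word_prod vs"
  shows "ws = vs"
  using assms
proof (induction ws arbitrary: vs)
  case Nil
  then show ?case
    using generator_word_prod_eq_mat_1_iff by fastforce
next
  case (Cons w ws)
  then obtain v vs' where vs: "vs = v # vs'"
    using generator_word_prod_eq_mat_1_iff by (metis list.exhaust word_prod_Nil)
  have w: "w \<in> {matA, matB, matC}" and v: "v \<in> {matA, matB, matC}"
    and ws: "set ws \<subseteq> {matA, matB, matC}" and vs': "set vs' \<subseteq> {matA, matB, matC}"
    using Cons.prems vs by auto
  have prod_eq: "w ** word_prod ws = v ** word_prod vs'"
    using Cons.prems(3) vs by simp
  have "w = v"
    using generator_mult_eq_imp_eq[OF w v _ _ prod_eq] positive_unimodular_generator_word ws vs'
    by blast
  moreover have "word_prod ws = word_prod vs'"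
    using det_1_2x2_mult_left_cancel positive_unimodular_generators[OF w] prod_eq \<open>w = v\<close>
    by (auto simp: positive_unimodular_def)
  ultimately show ?case
    using Cons.IH ws vs' vs by simp
qed

theorem proposition1:
  fixes ws vs :: "(int^2^2) list"
  assumes "ws \<noteq> []" and "vs \<noteq> []"
    and "set ws \<subseteq> {matA, matB, matC}" and "set vs \<subseteq> {matA, matB, matC}"
    and "word_prod ws = word_prod vs"
  shows "ws = vs"
  using assms(3-5) by (rule word_prod_eq_imp_eq)

end
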